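(* Let $(Y,d_Y)$ and $(X,d_X)$ be proper geodesic metric spaces, $a>0$, $b\ge0$, $\lambda\ge1$, $C\ge0$, and let $f:Y\to X$ be a continuous map such that (i) $d_X(f(y),f(y'))\ge a\,d_Y(y,y')-b$ for all $y,y'\in Y$; (ii) for every $y,y'\in Y$ and every geodesic segment $[y,y']$, the path $f([y,y'])$ is rectifiable and $\operatorname{Length}(f([y,y']))\le\lambda\,d_X(f(y),f(y'))+C$. If $(X,d_X)$ is $\delta$-hyperbolic, then $(Y,d_Y)$ is $\delta''$-hyperbolic with $$\delta''=\frac4a\Big((6\lambda^2+14\lambda+5)\delta+\frac{4\lambda+3}{6\lambda+2}C+b\Big)\le\frac4a\big((6\lambda^2+14\lambda+5)\delta+C+b\big).$$
   Context: A metric space is $\delta$-hyperbolic if it is proper, geodesic, and every geodesic triangle is $\delta$-thin: for a geodesic triangle $\Delta=[x,y,z]$ let $T_\Delta$ be the metric tripod with branch lengths $\alpha,\beta,\gamma\ge0$ determined by $d(x,y)=\alpha+\beta$, $d(x,z)=\alpha+\gamma$, $d(y,z)=\beta+\gamma$, and $f_\Delta:\Delta\to T_\Delta$ the map which is an isometry on each side; $\Delta$ is $\delta$-thin if any two points with the same image under $f_\Delta$ are at distance $\le\delta$. *)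

theory Defs
  imports "HOL-Analysis.Analysis"
begin

definition proper_space :: "'a::metric_space itself \<Rightarrow> bool" where
  "proper_space _ \<longleftrightarrow> (\<forall>(x::'a) r. compact (cball x r))"

definition geodesic_from :: "(real \<Rightarrow> 'a::metric_space) \<Rightarrow> 'a \<Rightarrow> 'a \<Rightarrow> bool" where
  "geodesic_from g x y \<longleftrightarrow> g 0 = x \<and> g (dist x y) = y \<and>
     (\<forall>s\<in>{0..dist x y}. \<forall>t\<in>{0..dist x y}. dist (g s) (g t) = \<bar>s - t\<bar>)"

definition geodesic_space :: "'a::metric_space itself \<Rightarrow> bool" where
  "geodesic_space _ \<longleftrightarrow> (\<forall>x y::'a. \<exists>g. geodesic_from g x y)"

definition partition_sums :: "(real \<Rightarrow> 'a::metric_space) \<Rightarrow> real \<Rightarrow> real \<Rightarrow> real set" where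
  "partition_sums g a b =
     {(\<Sum>i<n. dist (g (t i)) (g (t (Suc i)))) | n t.
        t 0 = a \<and> t n = b \<and> (\<forall>i<n. t i \<le> t (Suc i))}"

definition rectifiable_on :: "(real \<Rightarrow> 'a::metric_space) \<Rightarrow> real \<Rightarrow> real \<Rightarrow> bool" where
  "rectifiable_on g a b \<longleftrightarrow> bdd_above (partition_sums g a b)"

definition path_length :: "(real \<Rightarrow> 'a::metric_space) \<Rightarrow> real \<Rightarrow> real \<Rightarrow> real" where
  "path_length g a b = Sup (partition_sums g a b)"

text \<open>The metric tripod: points are (leg, distance from centre), centre normalised to (0,0).
  Legs 0,1,2 correspond to the vertices x,y,z.\<close>
definition tripod_pt :: "nat \<Rightarrow> real \<Rightarrow> nat \<times> real" where
  "tripod_pt i r = (if r = 0 then (0, 0) else (i, r))"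

text \<open>The map f_Delta on side k of the triangle [x,y,z], sides: 0 = [x,y], 1 = [x,z], 2 = [y,z],
  each parametrised by arclength from its first endpoint.\<close>
definition tripod_map :: "'a::metric_space \<Rightarrow> 'a \<Rightarrow> 'a \<Rightarrow> nat \<Rightarrow> real \<Rightarrow> nat \<times> real" where
  "tripod_map x y z k t =
    (let \<alpha> = (dist x y + dist x z - dist y z) / 2;
         \<beta> = (dist x y + dist y z - dist x z) / 2;
         \<gamma> = (dist x z + dist y z - dist x y) / 2 in
     if k = 0 then (if t \<le> \<alpha> then tripod_pt 0 (\<alpha> - t) else tripod_pt 1 (t - \<alpha>))
     else if k = 1 then (if t \<le> \<alpha> then tripod_pt 0 (\<alpha> - t) else tripod_pt 2 (t - \<alpha>))
     else (if t \<le> \<beta> then tripod_pt 1 (\<beta> - t) else tripod_pt 2 (t - \<beta>)))"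

definition delta_thin :: "real \<Rightarrow> 'a::metric_space \<Rightarrow> 'a \<Rightarrow> 'a \<Rightarrow>
    (real \<Rightarrow> 'a) \<Rightarrow> (real \<Rightarrow> 'a) \<Rightarrow> (real \<Rightarrow> 'a) \<Rightarrow> bool" where
  "delta_thin \<delta> x y z g0 g1 g2 \<longleftrightarrow>
    (let side = (\<lambda>k::nat. if k = 0 then g0 else if k = 1 then g1 else g2);
         len = (\<lambda>k::nat. if k = 0 then dist x y else if k = 1 then dist x z else dist y z) in
     \<forall>k\<in>{0,1,2}. \<forall>l\<in>{0,1,2}. \<forall>s\<in>{0..len k}. \<forall>t\<in>{0..len l}.
        tripod_map x y z k s = tripod_map x y z l t \<longrightarrow> dist (side k s) (side l t) \<le> \<delta>)"

definition hyperbolic :: "'a::metric_space itself \<Rightarrow> real \<Rightarrow> bool" where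
  "hyperbolic T \<delta> \<longleftrightarrow> proper_space T \<and> geodesic_space T \<and>
    (\<forall>(x::'a) y z g0 g1 g2. geodesic_from g0 x y \<and> geodesic_from g1 x z \<and> geodesic_from g2 y z
        \<longrightarrow> delta_thin \<delta> x y z g0 g1 g2)"

end

theory Submission
  imports Defs
begin

text \<open>Write \<open>(u|v)\<^sub>w\<close> for the Gromov product. For a point \<open>p\<close> of a \<open>\<delta>\<close>-hyperbolic space, the
  height \<open>(u|v)\<^sub>p\<close> is the distance from \<open>p\<close> to a geodesic \<open>[u,v]\<close> up to \<open>\<delta>\<close>, and \<open>(p|v)\<^sub>u\<close> locates
  its projection on \<open>[u,v]\<close>. If a path stays at height \<open>R \<ge> \<delta>\<close> while its projection moves by \<open>\<Delta>\<close>,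
  cutting it into pieces whose projections move by just over \<open>\<delta>\<close> shows that its length is at least
  about \<open>(2R/\<delta>) \<Delta>\<close>. For the image under \<open>f\<close> of a geodesic of \<open>Y\<close>, whose subpaths have length at
  most \<open>\<lambda>\<close> times the distance of their endpoints plus \<open>C\<close>, choosing \<open>R\<close> of order \<open>\<lambda>\<delta>\<close> therefore
  bounds both how far the image strays from the geodesic of \<open>X\<close> between its endpoints and how far
  that geodesic strays from the image. So images of geodesic triangles of \<open>Y\<close> are slim, and the lower
  bound \<open>a d(y,y') - b\<close> on \<open>f\<close> pulls slimness back to \<open>Y\<close>. By connectedness of the sides, \<open>d\<close>-slim
  triangles are \<open>4d\<close>-thin. The length estimate needs \<open>\<delta> > 0\<close>; the general case follows in the limit.\<close>

section \<open>Geodesics and Gromov products\<close>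

lemma geodesic_from_dist:
  assumes "geodesic_from g x y" "s \<in> {0..dist x y}" "t \<in> {0..dist x y}"
  shows "dist (g s) (g t) = \<bar>s - t\<bar>"
  using assms unfolding geodesic_from_def by blast

lemma geodesic_from_start: "geodesic_from g x y \<Longrightarrow> g 0 = x"
  unfolding geodesic_from_def by blast

lemma geodesic_from_end: "geodesic_from g x y \<Longrightarrow> g (dist x y) = y"
  unfolding geodesic_from_def by blast

lemma dist_start_geodesic_from:
  assumes "geodesic_from g x y" "0 \<le> s" "s \<le> dist x y"
  shows "dist x (g s) = s"
  using geodesic_from_dist[OF assms(1), of 0 s] geodesic_from_start[OF assms(1)] assms by auto

lemma dist_geodesic_from_end:
  assumes "geodesic_from g x y" "0 \<le> s" "s \<le> dist x y"
  shows "dist (g s) y = dist x y - s"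
  using geodesic_from_dist[OF assms(1), of s "dist x y"] geodesic_from_end[OF assms(1)] assms by auto

lemma continuous_on_geodesic_from:
  assumes "geodesic_from g x y"
  shows "continuous_on {0..dist x y} g"
  unfolding continuous_on_iff
proof (intro ballI allI impI)
  fix s e :: real assume s: "s \<in> {0..dist x y}" and e: "0 < e"
  show "\<exists>d>0. \<forall>t\<in>{0..dist x y}. dist t s < d \<longrightarrow> dist (g t) (g s) < e"
    using e geodesic_from_dist[OF assms _ s] by (intro exI[of _ e]) (auto simp: dist_real_def)
qed

lemma geodesic_from_shift:
  assumes "geodesic_from g x y" "0 \<le> s" "s \<le> t" "t \<le> dist x y"
  shows "geodesic_from (\<lambda>\<tau>. g (s + \<tau>)) (g s) (g t)"
proof -
  have "dist (g s) (g t) = t - s" using geodesic_from_dist[OF assms(1), of s t] assms by auto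
  then show ?thesis
    unfolding geodesic_from_def using geodesic_from_dist[OF assms(1)] assms by auto
qed

lemma geodesic_from_prefix:
  assumes "geodesic_from g x y" "0 \<le> s" "s \<le> dist x y"
  shows "geodesic_from g x (g s)"
  unfolding geodesic_from_def dist_start_geodesic_from[OF assms]
  using geodesic_from_start[OF assms(1)] geodesic_from_dist[OF assms(1)] assms by auto

lemma geodesic_from_reverse:
  assumes "geodesic_from g x y"
  shows "geodesic_from (\<lambda>\<tau>. g (dist x y - \<tau>)) y x"
  unfolding geodesic_from_def
  using geodesic_from_dist[OF assms] geodesic_from_start[OF assms] geodesic_from_end[OF assms]
  by (auto simp: dist_commute)

lemma geodesic_spaceE:
  assumes "geodesic_space TYPE('a::metric_space)"
  obtains g where "geodesic_from g (x::'a) y"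
  using assms unfolding geodesic_space_def by blast

definition gromov_product :: "'a::metric_space \<Rightarrow> 'a \<Rightarrow> 'a \<Rightarrow> real" where
  "gromov_product w x y = (dist w x + dist w y - dist x y) / 2"

lemma gromov_product_nonneg: "gromov_product w x y \<ge> 0"
  unfolding gromov_product_def using dist_triangle[of x y w] by (simp add: dist_commute)

lemma gromov_product_le_dist_left: "gromov_product w x y \<le> dist w x"
  unfolding gromov_product_def using dist_triangle[of w y x] by (simp add: dist_commute)

lemma gromov_product_le_dist_right: "gromov_product w x y \<le> dist w y"
  unfolding gromov_product_def using dist_triangle[of w x y] by (simp add: dist_commute)

lemma gromov_product_commute: "gromov_product w x y = gromov_product w y x"
  unfolding gromov_product_def by (simp add: dist_commute)

lemma gromov_product_add: "gromov_product x y z + gromov_product y x z = dist x y"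
  unfolding gromov_product_def by (simp add: dist_commute field_simps)

lemma gromov_product_base_left [simp]: "gromov_product u u v = 0"
  unfolding gromov_product_def by simp

lemma gromov_product_base_right [simp]: "gromov_product v u v = 0"
  unfolding gromov_product_def by (simp add: dist_commute)

lemma gromov_product_right_self [simp]: "gromov_product u v v = dist u v"
  unfolding gromov_product_def by simp

lemma gromov_product_lipschitz_base: "\<bar>gromov_product x u v - gromov_product x' u v\<bar> \<le> dist x x'"
  unfolding gromov_product_def
  using dist_triangle[of x u x'] dist_triangle[of x' u x] dist_triangle[of x v x']
    dist_triangle[of x' v x] dist_commute[of x u] dist_commute[of x v]
    dist_commute[of x' u] dist_commute[of x' v] dist_commute[of x x'] by argo

lemma continuous_on_gromov_product:
  assumes "continuous_on S P"
  shows "continuous_on S (\<lambda>\<sigma>. gromov_product (P \<sigma>) u v)"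
    and "continuous_on S (\<lambda>\<sigma>. gromov_product u (P \<sigma>) v)"
  unfolding gromov_product_def by (intro continuous_intros assms | simp)+

section \<open>Hyperbolic spaces\<close>

lemma hyperbolic_geodesic_space: "hyperbolic TYPE('a::metric_space) \<delta> \<Longrightarrow> geodesic_space TYPE('a)"
  unfolding hyperbolic_def by blast

lemma hyperbolic_insize:
  assumes hyp: "hyperbolic TYPE('a::metric_space) \<delta>"
    and g0: "geodesic_from g0 (x::'a) y" and g1: "geodesic_from g1 x z" and g2: "geodesic_from g2 y z"
    and s: "0 \<le> s" "s \<le> gromov_product x y z"
  shows "dist (g0 s) (g1 s) \<le> \<delta>"
proof -
  have "delta_thin \<delta> x y z g0 g1 g2" using hyp g0 g1 g2 unfolding hyperbolic_def by blast
  moreover have "tripod_map x y z 0 s = tripod_map x y z 1 s"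
    using s(2) unfolding tripod_map_def gromov_product_def Let_def by auto
  moreover have "s \<le> dist x y" "s \<le> dist x z"
    using s gromov_product_le_dist_left[of x y z] gromov_product_le_dist_right[of x y z] by linarith+
  ultimately show ?thesis using s(1) unfolding delta_thin_def Let_def by force
qed

lemma hyperbolic_thin_across:
  assumes hyp: "hyperbolic TYPE('a::metric_space) \<delta>"
    and g0: "geodesic_from g0 (x::'a) y" and g1: "geodesic_from g1 x z" and g2: "geodesic_from g2 y z"
    and s: "gromov_product x y z < s" "s \<le> dist x y"
  shows "dist (g0 s) (g2 (dist x y - s)) \<le> \<delta>"
proof -
  have "delta_thin \<delta> x y z g0 g1 g2" using hyp g0 g1 g2 unfolding hyperbolic_def by blast
  moreover have "tripod_map x y z 0 s = tripod_map x y z 2 (dist x y - s)"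
    using s(1) unfolding tripod_map_def gromov_product_def Let_def tripod_pt_def
    by (auto simp: dist_commute field_simps)
  moreover have "0 \<le> s" using gromov_product_nonneg[of x y z] s by linarith
  moreover have "dist x y - s \<le> dist y z"
    using s(1) dist_triangle[of x y z] unfolding gromov_product_def by (simp add: dist_commute)
  ultimately show ?thesis using s(2) unfolding delta_thin_def Let_def by force
qed

lemma hyperbolic_nonneg:
  assumes "hyperbolic TYPE('a::metric_space) \<delta>"
  shows "\<delta> \<ge> 0"
proof -
  fix x :: 'a
  have "geodesic_from (\<lambda>_. x) x x" unfolding geodesic_from_def by simp
  from hyperbolic_insize[OF assms this this this order_refl] show ?thesis by simp
qed

lemma hyperbolic_mono:
  assumes "hyperbolic TYPE('a::metric_space) \<delta>" "\<delta> \<le> \<delta>'"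
  shows "hyperbolic TYPE('a) \<delta>'"
  using assms unfolding hyperbolic_def delta_thin_def Let_def by (meson order_trans)

lemma hyperbolic_limit:
  fixes D :: "real \<Rightarrow> real"
  assumes hyp: "\<And>\<epsilon>. \<epsilon> > 0 \<Longrightarrow> hyperbolic TYPE('a::metric_space) (D \<epsilon>)"
    and lim: "(D \<longlongrightarrow> \<delta>) (at_right 0)"
  shows "hyperbolic TYPE('a) \<delta>"
  unfolding hyperbolic_def delta_thin_def Let_def
proof (intro conjI allI impI ballI)
  show "proper_space TYPE('a)" "geodesic_space TYPE('a)"
    using hyp[of 1] unfolding hyperbolic_def by auto
  fix x y z :: 'a and g0 g1 g2 k l s t
  assume "geodesic_from g0 x y \<and> geodesic_from g1 x z \<and> geodesic_from g2 y z"
    and "k \<in> {0, 1, 2}" "l \<in> {0, 1, 2}"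
    and "s \<in> {0..if k = 0 then dist x y else if k = 1 then dist x z else dist y z}"
    and "t \<in> {0..if l = 0 then dist x y else if l = 1 then dist x z else dist y z}"
    and "tripod_map x y z k s = tripod_map x y z l t"
  then have "dist ((if k = 0 then g0 else if k = 1 then g1 else g2) s)
      ((if l = 0 then g0 else if l = 1 then g1 else g2) t) \<le> D \<epsilon>" if "\<epsilon> > 0" for \<epsilon>
    using hyp[OF that] unfolding hyperbolic_def delta_thin_def Let_def by blast
  then show "dist ((if k = 0 then g0 else if k = 1 then g1 else g2) s)
      ((if l = 0 then g0 else if l = 1 then g1 else g2) t) \<le> \<delta>"
    by (intro tendsto_lowerbound[OF lim eventually_mono[OF eventually_at_right_less]]) auto
qed

definition slim :: "'a::metric_space itself \<Rightarrow> real \<Rightarrow> bool" where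
  "slim T d \<longleftrightarrow> (\<forall>(x::'a) y z h0 h1 h2 s. geodesic_from h0 x y \<and> geodesic_from h1 x z
     \<and> geodesic_from h2 y z \<and> s \<in> {0..dist x y} \<longrightarrow>
     (\<exists>s'\<in>{0..dist x z}. dist (h0 s) (h1 s') \<le> d) \<or> (\<exists>s'\<in>{0..dist y z}. dist (h0 s) (h2 s') \<le> d))"

lemma slimD:
  assumes "slim TYPE('a::metric_space) d"
    and "geodesic_from h0 (x::'a) y" "geodesic_from h1 x z" "geodesic_from h2 y z"
    and "0 \<le> s" "s \<le> dist x y"
  shows "(\<exists>s'\<in>{0..dist x z}. dist (h0 s) (h1 s') \<le> d) \<or> (\<exists>s'\<in>{0..dist y z}. dist (h0 s) (h2 s') \<le> d)"
  using assms unfolding slim_def by auto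

lemma hyperbolic_imp_slim:
  assumes hyp: "hyperbolic TYPE('a::metric_space) \<delta>"
  shows "slim TYPE('a) \<delta>"
  unfolding slim_def
proof (intro allI impI, elim conjE)
  fix x y z :: 'a and g0 g1 g2 s
  assume g: "geodesic_from g0 x y" "geodesic_from g1 x z" "geodesic_from g2 y z"
    and s: "s \<in> {0..dist x y}"
  show "(\<exists>s'\<in>{0..dist x z}. dist (g0 s) (g1 s') \<le> \<delta>) \<or> (\<exists>s'\<in>{0..dist y z}. dist (g0 s) (g2 s') \<le> \<delta>)"
  proof (cases "s \<le> gromov_product x y z")
    case True
    then have "s \<le> dist x z" using gromov_product_le_dist_right[of x y z] by linarith
    then show ?thesis using hyperbolic_insize[OF hyp g _ True] s by auto
  next
    case False
    then have "dist x y - s \<le> dist y z"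
      using dist_triangle[of x y z] unfolding gromov_product_def by (simp add: dist_commute)
    then show ?thesis
      using hyperbolic_thin_across[OF hyp g, of s] False s by (intro disjI2 bexI[of _ "dist x y - s"]) auto
  qed
qed

lemma hyperbolic_gromov_product_ge_min:
  assumes hyp: "hyperbolic TYPE('a::metric_space) \<delta>"
  shows "gromov_product (w::'a) x y \<ge> min (gromov_product w x z) (gromov_product w y z) - \<delta>"
proof -
  have gs: "geodesic_space TYPE('a)" using hyperbolic_geodesic_space[OF hyp] .
  obtain gx where gx: "geodesic_from gx w x" using geodesic_spaceE[OF gs] .
  obtain gy where gy: "geodesic_from gy w y" using geodesic_spaceE[OF gs] .
  obtain gz where gz: "geodesic_from gz w z" using geodesic_spaceE[OF gs] .
  obtain gxz where gxz: "geodesic_from gxz x z" using geodesic_spaceE[OF gs] .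
  obtain gyz where gyz: "geodesic_from gyz y z" using geodesic_spaceE[OF gs] .
  define t where "t = min (gromov_product w x z) (gromov_product w y z)"
  have t: "0 \<le> t" "t \<le> gromov_product w x z" "t \<le> gromov_product w y z"
    unfolding t_def using gromov_product_nonneg by auto
  have "t \<le> dist w x" "t \<le> dist w y"
    using t gromov_product_le_dist_left[of w x z] gromov_product_le_dist_left[of w y z] by linarith+
  then have "dist (gx t) x = dist w x - t" "dist (gy t) y = dist w y - t"
    using dist_geodesic_from_end[OF gx] dist_geodesic_from_end[OF gy] t(1) by auto
  moreover have "dist (gx t) (gz t) \<le> \<delta>" "dist (gy t) (gz t) \<le> \<delta>"
    using hyperbolic_insize[OF hyp gx gz gxz t(1,2)] hyperbolic_insize[OF hyp gy gz gyz t(1,3)] .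
  moreover have "dist x y \<le> dist x (gx t) + dist (gx t) (gz t) + dist (gz t) (gy t) + dist (gy t) y"
    using dist_triangle[of x y "gx t"] dist_triangle[of "gx t" y "gz t"]
      dist_triangle[of "gz t" y "gy t"] by linarith
  ultimately have "dist x y \<le> dist w x - t + \<delta> + \<delta> + (dist w y - t)"
    by (simp add: dist_commute)
  then show ?thesis unfolding gromov_product_def t_def by argo
qed

lemma hyperbolic_dist_geodesic_gromov_product:
  assumes hyp: "hyperbolic TYPE('a::metric_space) \<delta>" and g: "geodesic_from \<gamma> u (v::'a)"
  shows "dist (\<gamma> (gromov_product u y v)) y \<le> gromov_product y u v + \<delta>"
proof -
  have gs: "geodesic_space TYPE('a)" using hyperbolic_geodesic_space[OF hyp] .
  obtain g1 where g1: "geodesic_from g1 u y" using geodesic_spaceE[OF gs] .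
  obtain g2 where g2: "geodesic_from g2 v y" using geodesic_spaceE[OF gs] .
  let ?p = "gromov_product u v y"
  have "dist (\<gamma> ?p) (g1 ?p) \<le> \<delta>"
    using hyperbolic_insize[OF hyp g g1 g2 gromov_product_nonneg order_refl] .
  moreover have "dist (g1 ?p) y = dist u y - ?p"
    using dist_geodesic_from_end[OF g1 gromov_product_nonneg gromov_product_le_dist_right] .
  moreover have "dist (\<gamma> ?p) y \<le> dist (\<gamma> ?p) (g1 ?p) + dist (g1 ?p) y"
    by (rule dist_triangle)
  ultimately show ?thesis
    using dist_commute[of y u] dist_commute[of y v] unfolding gromov_product_commute[of u y v]
    unfolding gromov_product_def by argo
qed

lemma hyperbolic_dist_geodesic_le:
  assumes hyp: "hyperbolic TYPE('a::metric_space) \<delta>" and g: "geodesic_from \<gamma> u (v::'a)"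
    and r: "0 \<le> r" "r \<le> dist u v"
  shows "dist (\<gamma> r) y \<le> gromov_product y u v + \<delta> + \<bar>gromov_product u y v - r\<bar>"
proof -
  have "dist (\<gamma> r) (\<gamma> (gromov_product u y v)) = \<bar>r - gromov_product u y v\<bar>"
    using geodesic_from_dist[OF g] r gromov_product_nonneg[of u y v]
      gromov_product_le_dist_right[of u y v] by auto
  moreover have "dist (\<gamma> r) y \<le> dist (\<gamma> r) (\<gamma> (gromov_product u y v)) + dist (\<gamma> (gromov_product u y v)) y"
    by (rule dist_triangle)
  ultimately show ?thesis using hyperbolic_dist_geodesic_gromov_product[OF hyp g, of y] by linarith
qed

lemma hyperbolic_dist_ge_projections:
  assumes hyp: "hyperbolic TYPE('a::metric_space) \<delta>"
    and far: "\<bar>gromov_product u (x'::'a) v - gromov_product u x v\<bar> > \<delta>"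
  shows "dist x x' \<ge> gromov_product x u v + gromov_product x' u v
           + \<bar>gromov_product u x' v - gromov_product u x v\<bar> - 2 * \<delta>"
proof -
  have ordered: "dist p p' \<ge> gromov_product p u v + gromov_product p' u v
      + (gromov_product u p' v - gromov_product u p v) - 2 * \<delta>"
    if "gromov_product u p' v > gromov_product u p v + \<delta>" for p p' :: 'a
  proof -
    have "gromov_product u p v \<ge> min (gromov_product u p p') (gromov_product u v p') - \<delta>"
      using hyperbolic_gromov_product_ge_min[OF hyp] .
    then have "gromov_product u p p' \<le> gromov_product u p v + \<delta>"
      using that gromov_product_commute[of u v p'] by (auto simp: min_def split: if_splits)
    then show ?thesis
      unfolding gromov_product_def using dist_commute[of p u] dist_commute[of p v]
        dist_commute[of p' u] dist_commute[of p' v] by argo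
  qed
  show ?thesis
    using ordered[of x x'] ordered[of x' x] far by (cases "gromov_product u x' v \<ge> gromov_product u x v")
      (auto simp: dist_commute)
qed

lemma hyperbolic_dist_le_projections:
  assumes hyp: "hyperbolic TYPE('a::metric_space) \<delta>"
  shows "dist (x::'a) x' \<le> gromov_product x u v + gromov_product x' u v
           + \<bar>gromov_product u x' v - gromov_product u x v\<bar> + 2 * \<delta>"
proof -
  have "gromov_product u x x' \<ge> min (gromov_product u x v) (gromov_product u x' v) - \<delta>"
    using hyperbolic_gromov_product_ge_min[OF hyp] .
  then have "gromov_product u x x' \<ge> gromov_product u x v - \<delta> \<and> gromov_product u x v \<le> gromov_product u x' v
      \<or> gromov_product u x x' \<ge> gromov_product u x' v - \<delta> \<and> gromov_product u x' v \<le> gromov_product u x v"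
    by (auto simp: min_def split: if_splits)
  then show ?thesis
    unfolding gromov_product_def using dist_commute[of x u] dist_commute[of x v]
      dist_commute[of x' u] dist_commute[of x' v] by argo
qed

definition partition_sum :: "(real \<Rightarrow> 'a::metric_space) \<Rightarrow> nat \<Rightarrow> (nat \<Rightarrow> real) \<Rightarrow> real" where
  "partition_sum P n T = (\<Sum>i<n. dist (P (T i)) (P (T (Suc i))))"

definition is_partition :: "real \<Rightarrow> real \<Rightarrow> nat \<Rightarrow> (nat \<Rightarrow> real) \<Rightarrow> bool" where
  "is_partition a b n T \<longleftrightarrow> T 0 = a \<and> T n = b \<and> (\<forall>i<n. T i \<le> T (Suc i))"

lemma is_partition_mono:
  assumes "is_partition a b n T" "i \<le> j" "j \<le> n"
  shows "T i \<le> T j"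
  using assms(2,3)
proof (induction j)
  case (Suc j)
  show ?case
  proof (cases "i = Suc j")
    case False
    then have "T i \<le> T j" using Suc by auto
    moreover have "T j \<le> T (Suc j)" using Suc.prems assms(1) unfolding is_partition_def by auto
    ultimately show ?thesis by linarith
  qed simp
qed simp

lemma is_partition_bounds:
  assumes "is_partition a b n T" "i \<le> n"
  shows "a \<le> T i" "T i \<le> b"
  using is_partition_mono[OF assms(1), of 0 i] is_partition_mono[OF assms(1), of i n] assms
  unfolding is_partition_def by auto

lemma is_partition_two: "a \<le> b \<Longrightarrow> is_partition a b 1 (\<lambda>i. if i = 0 then a else b)"
  unfolding is_partition_def by simp

lemma partition_sum_two: "partition_sum P 1 (\<lambda>i. if i = 0 then a else b) = dist (P a) (P b)"
  unfolding partition_sum_def by simp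

lemma is_partition_append:
  assumes "is_partition a b n1 T1" "is_partition b c n2 T2"
  shows "is_partition a c (n1 + n2) (\<lambda>i. if i \<le> n1 then T1 i else T2 (i - n1))"
  using assms unfolding is_partition_def
  by (auto simp: Suc_diff_le)
    (metis Suc_leI add_less_imp_less_left diff_Suc_1 le_add_diff_inverse le_neq_implies_less
      less_diff_conv2 not_less_eq_eq)

lemma partition_sum_append:
  assumes "T1 n1 = T2 0"
  shows "partition_sum P (n1 + n2) (\<lambda>i. if i \<le> n1 then T1 i else T2 (i - n1))
    = partition_sum P n1 T1 + partition_sum P n2 T2"
proof (induction n2)
  case 0
  have "partition_sum P n1 (\<lambda>i. if i \<le> n1 then T1 i else T2 (i - n1)) = partition_sum P n1 T1"
    unfolding partition_sum_def by (intro sum.cong) auto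
  then show ?case by (simp add: partition_sum_def)
next
  case (Suc n2)
  then show ?case using assms unfolding partition_sum_def by (auto simp: Suc_diff_le)
qed

text \<open>Condition (ii) of the theorem for the restrictions of a path \<open>P\<close> to subintervals of \<open>[s,t]\<close>,
  with the length of a subpath replaced by its partition sums.\<close>

definition length_quasi_geodesic :: "real \<Rightarrow> real \<Rightarrow> (real \<Rightarrow> 'a::metric_space) \<Rightarrow> real \<Rightarrow> real \<Rightarrow> bool" where
  "length_quasi_geodesic lam C P s t \<longleftrightarrow> (\<forall>a b n T. s \<le> a \<longrightarrow> a \<le> b \<longrightarrow> b \<le> t \<longrightarrow>
      is_partition a b n T \<longrightarrow> partition_sum P n T \<le> lam * dist (P a) (P b) + C)"

lemma length_quasi_geodesicD:
  "length_quasi_geodesic lam C P s t \<Longrightarrow> s \<le> a \<Longrightarrow> a \<le> b \<Longrightarrow> b \<le> t \<Longrightarrow> is_partition a b n T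
    \<Longrightarrow> partition_sum P n T \<le> lam * dist (P a) (P b) + C"
  unfolding length_quasi_geodesic_def by blast

lemma length_quasi_geodesic_subinterval:
  "length_quasi_geodesic lam C P s t \<Longrightarrow> s \<le> s' \<Longrightarrow> t' \<le> t \<Longrightarrow> length_quasi_geodesic lam C P s' t'"
  unfolding length_quasi_geodesic_def by auto

lemma length_quasi_geodesic_comp_geodesic:
  fixes f :: "'a::metric_space \<Rightarrow> 'b::metric_space"
  assumes len: "\<forall>y y' g. geodesic_from g y y' \<longrightarrow>
           rectifiable_on (f \<circ> g) 0 (dist y y') \<and>
           path_length (f \<circ> g) 0 (dist y y') \<le> lam * dist (f y) (f y') + C"
    and h: "geodesic_from h x y"
  shows "length_quasi_geodesic lam C (f \<circ> h) 0 (dist x y)"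
  unfolding length_quasi_geodesic_def
proof (intro allI impI)
  fix a b n T
  assume ab: "0 \<le> a" "a \<le> b" "b \<le> dist x y" and T: "is_partition a b n T"
  define g where "g \<tau> = h (a + \<tau>)" for \<tau>
  have g: "geodesic_from g (h a) (h b)" unfolding g_def by (rule geodesic_from_shift[OF h ab])
  have dab: "dist (h a) (h b) = b - a" using geodesic_from_dist[OF h, of a b] ab by auto
  have "partition_sum (f \<circ> h) n T = (\<Sum>i<n. dist ((f \<circ> g) (T i - a)) ((f \<circ> g) (T (Suc i) - a)))"
    unfolding partition_sum_def g_def by simp
  moreover have "T 0 - a = 0 \<and> T n - a = dist (h a) (h b) \<and> (\<forall>i<n. T i - a \<le> T (Suc i) - a)"
    using T dab unfolding is_partition_def by auto
  ultimately have "partition_sum (f \<circ> h) n T \<in> partition_sums (f \<circ> g) 0 (dist (h a) (h b))"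
    unfolding partition_sums_def by (intro CollectI exI[of _ n] exI[of _ "\<lambda>i. T i - a"]) simp
  moreover have "rectifiable_on (f \<circ> g) 0 (dist (h a) (h b))"
    and "path_length (f \<circ> g) 0 (dist (h a) (h b)) \<le> lam * dist (f (h a)) (f (h b)) + C"
    using len g by blast+
  ultimately show "partition_sum (f \<circ> h) n T \<le> lam * dist ((f \<circ> h) a) ((f \<circ> h) b) + C"
    unfolding path_length_def rectifiable_on_def by (auto intro: cSup_upper order_trans)
qed

lemma closed_sets_gap:
  fixes A B :: "real set"
  assumes "closed A" "closed B" "s \<in> A" "t \<in> B" "A \<subseteq> {s..t}" "B \<subseteq> {s..t}"
  obtains \<sigma>1 \<sigma>2 where "\<sigma>1 \<in> A" "\<sigma>2 \<in> B" "\<sigma>1 \<le> \<sigma>2"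
    "\<And>\<sigma>. \<sigma>1 < \<sigma> \<Longrightarrow> \<sigma> < \<sigma>2 \<Longrightarrow> \<sigma> \<notin> A \<union> B"
proof -
  have bA: "bdd_above A" using assms(5) by (intro bdd_aboveI[of _ t]) auto
  define \<sigma>1 where "\<sigma>1 = Sup A"
  have \<sigma>1: "\<sigma>1 \<in> A" unfolding \<sigma>1_def using closed_contains_Sup[OF _ bA assms(1)] assms(3) by blast
  define B' where "B' = B \<inter> {\<sigma>1..}"
  have "t \<in> B'" unfolding B'_def using assms \<sigma>1 by auto
  then have B': "closed B'" "B' \<noteq> {}" "bdd_below B'"
    unfolding B'_def using assms by (auto intro!: closed_Int bdd_belowI[of _ s])
  define \<sigma>2 where "\<sigma>2 = Inf B'"
  have \<sigma>2: "\<sigma>2 \<in> B'" unfolding \<sigma>2_def using closed_contains_Inf[OF B'(2,3,1)] .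
  show ?thesis
  proof
    show "\<sigma>1 \<in> A" "\<sigma>2 \<in> B" "\<sigma>1 \<le> \<sigma>2" using \<sigma>1 \<sigma>2 unfolding B'_def by auto
    show "\<sigma> \<notin> A \<union> B" if "\<sigma>1 < \<sigma>" "\<sigma> < \<sigma>2" for \<sigma>
    proof -
      have "\<sigma> \<notin> A" using cSup_upper[OF _ bA, of \<sigma>] that unfolding \<sigma>1_def by force
      moreover have "\<sigma> \<notin> B'" using cInf_lower[OF _ B'(3), of \<sigma>] that unfolding \<sigma>2_def by force
      ultimately show ?thesis using that unfolding B'_def by auto
    qed
  qed
qed

lemma closed_sublevel_on:
  fixes F :: "real \<Rightarrow> real"
  assumes "continuous_on {a..b} F"
  shows "closed {\<sigma>\<in>{a..b}. F \<sigma> \<le> c}" "closed {\<sigma>\<in>{a..b}. F \<sigma> \<ge> c}" "closed {\<sigma>\<in>{a..b}. F \<sigma> = c}"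
proof -
  have "{\<sigma>\<in>{a..b}. F \<sigma> \<le> c} = {a..b} \<inter> F -` {..c}" "{\<sigma>\<in>{a..b}. F \<sigma> \<ge> c} = {a..b} \<inter> F -` {c..}"
    "{\<sigma>\<in>{a..b}. F \<sigma> = c} = {a..b} \<inter> F -` {c}" by auto
  then show "closed {\<sigma>\<in>{a..b}. F \<sigma> \<le> c}" "closed {\<sigma>\<in>{a..b}. F \<sigma> \<ge> c}" "closed {\<sigma>\<in>{a..b}. F \<sigma> = c}"
    using continuous_closed_preimage[OF assms] by auto
qed

lemma continuous_on_low_crossing:
  fixes H G :: "real \<Rightarrow> real"
  assumes H: "continuous_on {s..t} H" and G: "continuous_on {s..t} G" and "s \<le> t"
    and "H s \<le> R" "H t \<le> R" "G s \<le> c" "c \<le> G t"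
  obtains \<sigma>1 \<sigma>2 where "s \<le> \<sigma>1" "\<sigma>1 \<le> \<sigma>2" "\<sigma>2 \<le> t" "H \<sigma>1 \<le> R" "H \<sigma>2 \<le> R" "G \<sigma>1 \<le> c" "c \<le> G \<sigma>2"
    "\<And>\<sigma>. \<sigma>1 < \<sigma> \<Longrightarrow> \<sigma> < \<sigma>2 \<Longrightarrow> H \<sigma> > R"
proof -
  define A where "A = {\<sigma>\<in>{s..t}. H \<sigma> \<le> R} \<inter> {\<sigma>\<in>{s..t}. G \<sigma> \<le> c}"
  define B where "B = {\<sigma>\<in>{s..t}. H \<sigma> \<le> R} \<inter> {\<sigma>\<in>{s..t}. G \<sigma> \<ge> c}"
  have "closed A" "closed B"
    unfolding A_def B_def using closed_sublevel_on[OF H] closed_sublevel_on[OF G] by auto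
  moreover have "s \<in> A" "t \<in> B" "A \<subseteq> {s..t}" "B \<subseteq> {s..t}" unfolding A_def B_def using assms by auto
  ultimately obtain \<sigma>1 \<sigma>2 where \<sigma>: "\<sigma>1 \<in> A" "\<sigma>2 \<in> B" "\<sigma>1 \<le> \<sigma>2"
    and gap: "\<And>\<sigma>. \<sigma>1 < \<sigma> \<Longrightarrow> \<sigma> < \<sigma>2 \<Longrightarrow> \<sigma> \<notin> A \<union> B"
    using closed_sets_gap[of A B s t] by blast
  moreover have "H \<sigma> > R" if "\<sigma>1 < \<sigma>" "\<sigma> < \<sigma>2" for \<sigma>
    using gap[OF that] \<sigma> that unfolding A_def B_def by auto
  ultimately show ?thesis using that unfolding A_def B_def by auto
qed

lemma first_hitting_time:
  fixes F :: "real \<Rightarrow> real"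
  assumes cont: "continuous_on {t0..t1} F" and b: "t0 \<le> b" "b \<le> t1"
    and y: "min (F t0) (F b) \<le> y" "y \<le> max (F t0) (F b)"
  shows "t0 \<le> Inf {\<sigma>\<in>{t0..t1}. F \<sigma> = y} \<and> Inf {\<sigma>\<in>{t0..t1}. F \<sigma> = y} \<le> b
    \<and> F (Inf {\<sigma>\<in>{t0..t1}. F \<sigma> = y}) = y"
proof -
  define S where "S = {\<sigma>\<in>{t0..t1}. F \<sigma> = y}"
  have "continuous_on {t0..b} F" using continuous_on_subset[OF cont] b by auto
  then obtain x where x: "t0 \<le> x" "x \<le> b" "F x = y"
    using IVT'[of F t0 y b] IVT2'[of F b y t0] b y by (cases "F t0 \<le> F b") auto
  then have "x \<in> S" unfolding S_def using b by auto
  moreover have "closed S" "bdd_below S"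
    unfolding S_def using closed_sublevel_on(3)[OF cont] by (auto intro: bdd_belowI[of _ t0])
  ultimately have "Inf S \<in> S" "Inf S \<le> x" using closed_contains_Inf cInf_lower by blast+
  then show ?thesis using x unfolding S_def by auto
qed

lemma continuous_on_level_partition:
  fixes F :: "real \<Rightarrow> real"
  assumes cont: "continuous_on {t0..t1} F" and "t0 \<le> t1" and "0 < k"
  obtains T where "is_partition t0 t1 k T"
    "\<And>j. j \<le> k \<Longrightarrow> F (T j) = F t0 + real j / real k * (F t1 - F t0)"
proof -
  define lev where "lev j = F t0 + real j / real k * (F t1 - F t0)" for j
  have lev_between: "min (F t0) (lev m) \<le> lev j \<and> lev j \<le> max (F t0) (lev m)" if "j \<le> m" for j m
  proof -
    define D where "D = F t1 - F t0"
    have w: "0 \<le> real j / real k" "real j / real k \<le> real m / real k"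
      using that by (auto simp: divide_right_mono)
    have "0 \<le> real j / real k * D \<and> real j / real k * D \<le> real m / real k * D
        \<or> real m / real k * D \<le> real j / real k * D \<and> real j / real k * D \<le> 0"
    proof (cases "D \<ge> 0")
      case True
      then show ?thesis using mult_right_mono[OF w(2) True] mult_nonneg_nonneg[OF w(1) True] by blast
    next
      case False
      then have "D \<le> 0" by simp
      then show ?thesis using mult_right_mono_neg[OF w(2)] mult_nonneg_nonpos[OF w(1)] by blast
    qed
    then show ?thesis unfolding lev_def D_def[symmetric] by auto
  qed
  define first where "first j = Inf {\<sigma>\<in>{t0..t1}. F \<sigma> = lev j}" for j
  have first: "t0 \<le> first j \<and> first j \<le> b \<and> F (first j) = lev j"
    if "t0 \<le> b" "b \<le> t1" "F b = lev m" "j \<le> m" for b j m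
    using first_hitting_time[OF cont that(1,2)] lev_between[OF that(4)] that(3) unfolding first_def by auto
  have F_t1: "F t1 = lev k" unfolding lev_def using assms(3) by simp
  define T where "T j = (if j < k then first j else t1)" for j
  have T: "t0 \<le> T j" "T j \<le> t1" "F (T j) = lev j" if "j \<le> k" for j
    using first[OF assms(2) order_refl F_t1 that] that assms(2) F_t1 unfolding T_def by auto
  have "is_partition t0 t1 k T"
    unfolding is_partition_def
  proof (intro conjI allI impI)
    show "T 0 = t0" using first[of t0 0 0] assms unfolding T_def lev_def by force
    show "T k = t1" unfolding T_def by simp
    fix j assume "j < k"
    then show "T j \<le> T (Suc j)"
      using first[of "T (Suc j)" "Suc j" j] T[of "Suc j"] T[of j] unfolding T_def by auto
  qed
  then show ?thesis using that T(3) unfolding lev_def by blast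
qed

lemma sum_adjacent_pairs_ge:
  fixes H :: "nat \<Rightarrow> real"
  assumes "0 < k" "\<And>j. 0 < j \<Longrightarrow> j < k \<Longrightarrow> R \<le> H j"
  shows "(\<Sum>i<k. H i + H (Suc i)) \<ge> H 0 + H k + 2 * (real k - 1) * R"
  using assms
proof (induction k)
  case (Suc k)
  show ?case
  proof (cases "k = 0")
    case False
    then have "(\<Sum>i<k. H i + H (Suc i)) \<ge> H 0 + H k + 2 * (real k - 1) * R" "H k \<ge> R"
      using Suc by auto
    then show ?thesis by (simp add: algebra_simps)
  qed simp
qed simp

section \<open>Paths far from a geodesic\<close>

lemma hyperbolic_partition_sum_ge_steps:
  fixes P :: "real \<Rightarrow> 'a::metric_space" and u v :: 'a
  assumes hyp: "hyperbolic TYPE('a) \<delta>" and T: "is_partition t0 t1 k T" and "0 < k" and "\<delta> < c"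
    and steps: "\<And>j. j < k \<Longrightarrow> \<bar>gromov_product u (P (T (Suc j))) v - gromov_product u (P (T j)) v\<bar> = c"
    and high: "\<And>j. 0 < j \<Longrightarrow> j < k \<Longrightarrow> gromov_product (P (T j)) u v \<ge> R"
  shows "partition_sum P k T \<ge> gromov_product (P t0) u v + gromov_product (P t1) u v
           + 2 * (real k - 1) * R + real k * (c - 2 * \<delta>)"
proof -
  define H where "H \<sigma> = gromov_product (P \<sigma>) u v" for \<sigma>
  have "dist (P (T j)) (P (T (Suc j))) \<ge> H (T j) + H (T (Suc j)) + (c - 2 * \<delta>)" if "j < k" for j
    using hyperbolic_dist_ge_projections[OF hyp, of u "P (T (Suc j))" v "P (T j)"] steps[OF that] \<open>\<delta> < c\<close>
    unfolding H_def by simp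
  then have "partition_sum P k T \<ge> (\<Sum>i<k. H (T i) + H (T (Suc i)) + (c - 2 * \<delta>))"
    unfolding partition_sum_def by (intro sum_mono) simp
  also have "(\<Sum>i<k. H (T i) + H (T (Suc i)) + (c - 2 * \<delta>))
      = (\<Sum>i<k. H (T i) + H (T (Suc i))) + real k * (c - 2 * \<delta>)"
    by (simp add: sum.distrib)
  finally show ?thesis
    using sum_adjacent_pairs_ge[of k R "H \<circ> T"] \<open>0 < k\<close> high T
    unfolding is_partition_def H_def by simp
qed

text \<open>Cutting the path at the first times its projection reaches \<open>k\<close> equally spaced levels, with
  \<open>k\<close> the largest integer making the steps exceed \<open>\<delta>\<close>.\<close>

lemma hyperbolic_detour_partition_long:
  fixes P :: "real \<Rightarrow> 'a::metric_space" and u v :: 'a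
  assumes hyp: "hyperbolic TYPE('a) \<delta>" and \<delta>: "\<delta> > 0" and R: "R \<ge> \<delta>" and "t0 \<le> t1"
    and cont: "continuous_on {t0..t1} P"
    and high: "\<And>\<sigma>. t0 < \<sigma> \<Longrightarrow> \<sigma> < t1 \<Longrightarrow> gromov_product (P \<sigma>) u v \<ge> R"
    and long: "\<bar>gromov_product u (P t1) v - gromov_product u (P t0) v\<bar> > \<delta>"
  obtains n T where "is_partition t0 t1 n T"
    "partition_sum P n T \<ge> gromov_product (P t0) u v + gromov_product (P t1) u v - 4 * R + \<delta>
       + (2 * R / \<delta> - 1) * \<bar>gromov_product u (P t1) v - gromov_product u (P t0) v\<bar>"
proof -
  define Pr where "Pr \<sigma> = gromov_product u (P \<sigma>) v" for \<sigma>
  define \<Delta> where "\<Delta> = \<bar>Pr t1 - Pr t0\<bar>"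
  define q where "q = \<Delta> / \<delta>"
  have q: "q > 1" "\<Delta> = q * \<delta>" unfolding q_def \<Delta>_def Pr_def using long \<delta> by (auto simp: field_simps)
  define k where "k = nat (\<lceil>q\<rceil> - 1)"
  have k: "0 < k" "real k < q" "q - 1 \<le> real k"
    unfolding k_def using q(1) by linarith+
  have "continuous_on {t0..t1} Pr" unfolding Pr_def by (rule continuous_on_gromov_product[OF cont])
  then obtain T where T: "is_partition t0 t1 k T"
    and lev: "\<And>j. j \<le> k \<Longrightarrow> Pr (T j) = Pr t0 + real j / real k * (Pr t1 - Pr t0)"
    using continuous_on_level_partition[OF _ \<open>t0 \<le> t1\<close> k(1)] by blast
  have "\<bar>Pr (T (Suc j)) - Pr (T j)\<bar> = \<Delta> / real k" if "j < k" for j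
  proof -
    have "Pr (T (Suc j)) - Pr (T j) = (Pr t1 - Pr t0) / real k"
      using lev[of j] lev[of "Suc j"] that k(1) by (simp add: field_simps)
    then show ?thesis unfolding \<Delta>_def by simp
  qed
  moreover have "R \<le> gromov_product (P (T j)) u v" if "0 < j" "j < k" for j
  proof -
    have "Pr t1 \<noteq> Pr t0" using q \<delta> unfolding \<Delta>_def by auto
    moreover have "real j / real k \<noteq> 0" "real j / real k - 1 \<noteq> 0"
      using that by (auto simp: field_simps)
    moreover have "Pr (T j) - Pr t0 = real j / real k * (Pr t1 - Pr t0)"
      "Pr (T j) - Pr t1 = (real j / real k - 1) * (Pr t1 - Pr t0)"
      using lev[of j] that by (simp_all add: algebra_simps)
    ultimately have "Pr (T j) \<noteq> Pr t0" "Pr (T j) \<noteq> Pr t1" by auto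
    then show ?thesis using is_partition_bounds[OF T, of j] that high by force
  qed
  moreover have "\<delta> < \<Delta> / real k" using k q \<delta> by (simp add: field_simps)
  ultimately have "partition_sum P k T \<ge> gromov_product (P t0) u v + gromov_product (P t1) u v
      + 2 * (real k - 1) * R + real k * (\<Delta> / real k - 2 * \<delta>)"
    using hyperbolic_partition_sum_ge_steps[OF hyp T k(1)] unfolding Pr_def by blast
  moreover have "real k * (\<Delta> / real k - 2 * \<delta>) = q * \<delta> - 2 * (real k * \<delta>)"
    using k(1) q(2) by (simp add: field_simps)
  moreover have "(2 * R / \<delta> - 1) * \<Delta> = 2 * (q * R) - q * \<delta>"
    using q(2) \<delta> by (simp add: field_simps)
  moreover have "real k * R - real k * \<delta> - q * R + q * \<delta> + R - \<delta> \<ge> 0"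
    using mult_nonneg_nonneg[of "real k + 1 - q" "R - \<delta>"] k(3) R by (simp add: algebra_simps)
  moreover have "2 * (real k - 1) * R = 2 * (real k * R) - 2 * R" by (simp add: algebra_simps)
  ultimately have "partition_sum P k T \<ge> gromov_product (P t0) u v + gromov_product (P t1) u v - 4 * R + \<delta>
       + (2 * R / \<delta> - 1) * \<Delta>"
    using \<delta> by linarith
  then show ?thesis using that[OF T] unfolding \<Delta>_def Pr_def by blast
qed

lemma hyperbolic_detour_partition:
  fixes P :: "real \<Rightarrow> 'a::metric_space" and u v :: 'a
  assumes hyp: "hyperbolic TYPE('a) \<delta>" and \<delta>: "\<delta> > 0" and R: "R \<ge> \<delta>" and "t0 \<le> t1"
    and cont: "continuous_on {t0..t1} P"
    and high: "\<And>\<sigma>. t0 < \<sigma> \<Longrightarrow> \<sigma> < t1 \<Longrightarrow> gromov_product (P \<sigma>) u v \<ge> R"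
    and low: "gromov_product (P t0) u v \<le> R \<or> gromov_product (P t1) u v \<le> R"
  obtains n T where "is_partition t0 t1 n T"
    "partition_sum P n T \<ge> gromov_product (P t0) u v + gromov_product (P t1) u v - 4 * R + \<delta>
       + (2 * R / \<delta> - 1) * \<bar>gromov_product u (P t1) v - gromov_product u (P t0) v\<bar>"
proof (cases "\<bar>gromov_product u (P t1) v - gromov_product u (P t0) v\<bar> \<le> \<delta>")
  case True
  have "(2 * R / \<delta> - 1) * \<bar>gromov_product u (P t1) v - gromov_product u (P t0) v\<bar> \<le> (2 * R / \<delta> - 1) * \<delta>"
    using \<delta> R True by (intro mult_left_mono) (auto simp: field_simps)
  also have "\<dots> = 2 * R - \<delta>" using \<delta> by (simp add: field_simps)
  finally have "partition_sum P 1 (\<lambda>i. if i = 0 then t0 else t1)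
      \<ge> gromov_product (P t0) u v + gromov_product (P t1) u v - 4 * R + \<delta>
        + (2 * R / \<delta> - 1) * \<bar>gromov_product u (P t1) v - gromov_product u (P t0) v\<bar>"
    using gromov_product_lipschitz_base[of "P t0" u v "P t1"] low
    unfolding partition_sum_two abs_le_iff by linarith
  then show ?thesis using that is_partition_two[OF \<open>t0 \<le> t1\<close>] by blast
next
  case False
  then have "\<bar>gromov_product u (P t1) v - gromov_product u (P t0) v\<bar> > \<delta>" by simp
  then show ?thesis using hyperbolic_detour_partition_long[OF hyp \<delta> R \<open>t0 \<le> t1\<close> cont high] that by metis
qed

text \<open>The two detours from low points \<open>\<sigma>1\<close>, \<open>\<sigma>2\<close> up to \<open>P \<tau>\<close> together are no longer than
  \<open>lam\<close> times the distance between the low points, which is bounded through their projections.\<close>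

lemma length_quasi_geodesic_detour_bound:
  fixes P :: "real \<Rightarrow> 'a::metric_space" and u v :: 'a
  assumes hyp: "hyperbolic TYPE('a) \<delta>" and \<delta>: "\<delta> > 0" and R: "R \<ge> \<delta>" and lam: "lam \<ge> 1"
    and cont: "continuous_on {\<sigma>1..\<sigma>2} P" and qg: "length_quasi_geodesic lam C P \<sigma>1 \<sigma>2"
    and \<tau>: "\<sigma>1 \<le> \<tau>" "\<tau> \<le> \<sigma>2"
    and low: "gromov_product (P \<sigma>1) u v \<le> R" "gromov_product (P \<sigma>2) u v \<le> R"
    and high: "\<And>\<sigma>. \<sigma>1 < \<sigma> \<Longrightarrow> \<sigma> < \<sigma>2 \<Longrightarrow> gromov_product (P \<sigma>) u v \<ge> R"
  shows "2 * gromov_product (P \<tau>) u v + (2 * R / \<delta> - 1 - lam) *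
      (\<bar>gromov_product u (P \<tau>) v - gromov_product u (P \<sigma>1) v\<bar>
       + \<bar>gromov_product u (P \<sigma>2) v - gromov_product u (P \<tau>) v\<bar>)
    \<le> 2 * (lam + 3) * R + 2 * (lam - 1) * \<delta> + C"
proof -
  define H where "H \<sigma> = gromov_product (P \<sigma>) u v" for \<sigma>
  define Pr where "Pr \<sigma> = gromov_product u (P \<sigma>) v" for \<sigma>
  define \<kappa> where "\<kappa> = 2 * R / \<delta> - 1"
  define D1 where "D1 = \<bar>Pr \<tau> - Pr \<sigma>1\<bar>"
  define D2 where "D2 = \<bar>Pr \<sigma>2 - Pr \<tau>\<bar>"
  have "continuous_on {\<sigma>1..\<tau>} P" "continuous_on {\<tau>..\<sigma>2} P"
    using continuous_on_subset[OF cont] \<tau> by auto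
  moreover have "\<And>\<sigma>. \<sigma>1 < \<sigma> \<Longrightarrow> \<sigma> < \<tau> \<Longrightarrow> gromov_product (P \<sigma>) u v \<ge> R"
    "\<And>\<sigma>. \<tau> < \<sigma> \<Longrightarrow> \<sigma> < \<sigma>2 \<Longrightarrow> gromov_product (P \<sigma>) u v \<ge> R"
    using high \<tau> by auto
  ultimately obtain n1 T1 n2 T2 where T1: "is_partition \<sigma>1 \<tau> n1 T1" and T2: "is_partition \<tau> \<sigma>2 n2 T2"
    and ps1: "partition_sum P n1 T1 \<ge> H \<sigma>1 + H \<tau> - 4 * R + \<delta> + \<kappa> * D1"
    and ps2: "partition_sum P n2 T2 \<ge> H \<tau> + H \<sigma>2 - 4 * R + \<delta> + \<kappa> * D2"
    using hyperbolic_detour_partition[OF hyp \<delta> R \<tau>(1), of P u v]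
      hyperbolic_detour_partition[OF hyp \<delta> R \<tau>(2), of P u v] low
    unfolding H_def Pr_def \<kappa>_def D1_def D2_def by metis
  define T where "T i = (if i \<le> n1 then T1 i else T2 (i - n1))" for i
  have "partition_sum P (n1 + n2) T = partition_sum P n1 T1 + partition_sum P n2 T2"
    unfolding T_def using T1 T2 by (intro partition_sum_append) (simp add: is_partition_def)
  moreover have "partition_sum P (n1 + n2) T \<le> lam * dist (P \<sigma>1) (P \<sigma>2) + C"
    unfolding T_def using \<tau> by (intro length_quasi_geodesicD[OF qg _ _ _ is_partition_append[OF T1 T2]]) auto
  moreover have "dist (P \<sigma>1) (P \<sigma>2) \<le> H \<sigma>1 + H \<sigma>2 + (D1 + D2) + 2 * \<delta>"
    using hyperbolic_dist_le_projections[OF hyp, of "P \<sigma>1" "P \<sigma>2" u v]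
    unfolding H_def Pr_def D1_def D2_def by linarith
  then have "lam * dist (P \<sigma>1) (P \<sigma>2) \<le> lam * (H \<sigma>1 + H \<sigma>2 + (D1 + D2) + 2 * \<delta>)"
    using lam by (intro mult_left_mono) auto
  moreover have "(lam - 1) * H \<sigma>1 \<le> (lam - 1) * R" "(lam - 1) * H \<sigma>2 \<le> (lam - 1) * R"
    using low lam unfolding H_def by (auto intro: mult_left_mono)
  moreover have "lam * (H \<sigma>1 + H \<sigma>2 + (D1 + D2) + 2 * \<delta>)
      = lam * H \<sigma>1 + lam * H \<sigma>2 + lam * D1 + lam * D2 + 2 * (lam * \<delta>)"
    "(lam - 1) * H \<sigma>1 = lam * H \<sigma>1 - H \<sigma>1" "(lam - 1) * H \<sigma>2 = lam * H \<sigma>2 - H \<sigma>2"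
    "(\<kappa> - lam) * (D1 + D2) = \<kappa> * D1 + \<kappa> * D2 - lam * D1 - lam * D2"
    "2 * (lam + 3) * R + 2 * (lam - 1) * \<delta> = 2 * ((lam - 1) * R) + 8 * R + 2 * (lam * \<delta>) - 2 * \<delta>"
    by (simp_all add: algebra_simps)
  ultimately have "2 * H \<tau> + (\<kappa> - lam) * (D1 + D2) \<le> 2 * (lam + 3) * R + 2 * (lam - 1) * \<delta> + C"
    using ps1 ps2 by linarith
  then show ?thesis unfolding H_def Pr_def \<kappa>_def D1_def D2_def by (simp add: diff_diff_add)
qed

lemma length_quasi_geodesic_height_le:
  fixes P :: "real \<Rightarrow> 'a::metric_space"
  assumes hyp: "hyperbolic TYPE('a) \<delta>" and \<delta>: "\<delta> > 0" and lam: "lam \<ge> 1"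
    and cont: "continuous_on {s..t} P" and qg: "length_quasi_geodesic lam C P s t"
    and \<tau>: "s \<le> \<tau>" "\<tau> \<le> t"
  shows "gromov_product (P \<tau>) (P s) (P t) \<le> (C + (lam\<^sup>2 + 6 * lam + 1) * \<delta>) / 2"
proof -
  define R where "R = (lam + 1) * \<delta> / 2"
  define H where "H \<sigma> = gromov_product (P \<sigma>) (P s) (P t)" for \<sigma>
  have R: "R \<ge> \<delta>" and \<kappa>: "2 * R / \<delta> - 1 - lam = 0"
    unfolding R_def using lam \<delta> by (auto simp: field_simps)
  have "continuous_on {s..t} H" unfolding H_def by (intro continuous_on_gromov_product cont)
  moreover have "H s \<le> R" "H t \<le> R" unfolding H_def R_def using \<delta> lam by auto
  ultimately obtain \<sigma>1 \<sigma>2 where "s \<le> \<sigma>1" "\<sigma>1 \<le> \<tau>" "\<tau> \<le> \<sigma>2" "\<sigma>2 \<le> t" "H \<sigma>1 \<le> R" "H \<sigma>2 \<le> R"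
    and "\<And>\<sigma>. \<sigma>1 < \<sigma> \<Longrightarrow> \<sigma> < \<sigma>2 \<Longrightarrow> H \<sigma> > R"
    using continuous_on_low_crossing[OF _ continuous_on_id, of s t H R \<tau>] \<tau> by (metis order_trans id_apply)
  then have "2 * H \<tau> \<le> 2 * (lam + 3) * R + 2 * (lam - 1) * \<delta> + C"
    using length_quasi_geodesic_detour_bound[OF hyp \<delta> R lam
        continuous_on_subset[OF cont] length_quasi_geodesic_subinterval[OF qg], of \<sigma>1 \<sigma>2 \<tau> "P s" "P t"]
    unfolding \<kappa> H_def by force
  then show ?thesis unfolding H_def R_def by (simp add: field_simps power2_eq_square)
qed

lemma length_quasi_geodesic_near_geodesic:
  fixes P :: "real \<Rightarrow> 'a::metric_space"
  assumes hyp: "hyperbolic TYPE('a) \<delta>" and \<delta>: "\<delta> > 0" and lam: "lam \<ge> 1" and "s \<le> t"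
    and cont: "continuous_on {s..t} P" and qg: "length_quasi_geodesic lam C P s t"
    and \<gamma>: "geodesic_from \<gamma> (P s) (P t)" and r: "0 \<le> r" "r \<le> dist (P s) (P t)"
  shows "\<exists>\<tau>\<in>{s..t}. dist (\<gamma> r) (P \<tau>) \<le> (C + (lam\<^sup>2 + 12 * lam + 28) * \<delta>) / 6"
proof -
  define R where "R = (lam + 4) * \<delta> / 2"
  define H where "H \<sigma> = gromov_product (P \<sigma>) (P s) (P t)" for \<sigma>
  define Pr where "Pr \<sigma> = gromov_product (P s) (P \<sigma>) (P t)" for \<sigma>
  have R: "R \<ge> \<delta>" and \<kappa>: "2 * R / \<delta> - 1 - lam = 3"
    unfolding R_def using lam \<delta> by (auto simp: field_simps)
  have "continuous_on {s..t} H" "continuous_on {s..t} Pr"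
    unfolding H_def Pr_def by (intro continuous_on_gromov_product cont)+
  moreover have "H s \<le> R" "H t \<le> R" "Pr s \<le> r" "r \<le> Pr t" unfolding H_def Pr_def R_def using \<delta> lam r by auto
  ultimately obtain \<sigma>1 \<sigma>2 where \<sigma>: "s \<le> \<sigma>1" "\<sigma>1 \<le> \<sigma>2" "\<sigma>2 \<le> t" "H \<sigma>1 \<le> R" "H \<sigma>2 \<le> R"
      "Pr \<sigma>1 \<le> r" "r \<le> Pr \<sigma>2"
    and high: "\<And>\<sigma>. \<sigma>1 < \<sigma> \<Longrightarrow> \<sigma> < \<sigma>2 \<Longrightarrow> H \<sigma> > R"
    using continuous_on_low_crossing[OF _ _ \<open>s \<le> t\<close>] by blast
  then have "2 * H \<sigma>1 + 3 * (Pr \<sigma>2 - Pr \<sigma>1) \<le> 2 * (lam + 3) * R + 2 * (lam - 1) * \<delta> + C"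
    using length_quasi_geodesic_detour_bound[OF hyp \<delta> R lam
        continuous_on_subset[OF cont] length_quasi_geodesic_subinterval[OF qg], of \<sigma>1 \<sigma>2 \<sigma>1 "P s" "P t"]
    unfolding \<kappa> H_def Pr_def by force
  then have bound: "R + \<delta> + (Pr \<sigma>2 - Pr \<sigma>1) / 2 \<le> (C + (lam\<^sup>2 + 12 * lam + 28) * \<delta>) / 6"
    using gromov_product_nonneg[of "P \<sigma>1" "P s" "P t"]
    unfolding H_def R_def by (simp add: field_simps power2_eq_square)
  have near: "dist (\<gamma> r) (P \<sigma>) \<le> R + \<delta> + \<bar>Pr \<sigma> - r\<bar>" if "H \<sigma> \<le> R" for \<sigma>
    using hyperbolic_dist_geodesic_le[OF hyp \<gamma> r, of "P \<sigma>"] that unfolding H_def Pr_def by linarith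
  have "\<bar>Pr \<sigma>1 - r\<bar> = r - Pr \<sigma>1" "\<bar>Pr \<sigma>2 - r\<bar> = Pr \<sigma>2 - r" using \<sigma> by auto
  then show ?thesis
  proof (cases "r - Pr \<sigma>1 \<le> Pr \<sigma>2 - r")
    case True
    then have "dist (\<gamma> r) (P \<sigma>1) \<le> R + \<delta> + (Pr \<sigma>2 - Pr \<sigma>1) / 2"
      using near[OF \<sigma>(4)] \<open>\<bar>Pr \<sigma>1 - r\<bar> = r - Pr \<sigma>1\<close> by argo
    then show ?thesis using \<sigma> by (intro bexI[of _ \<sigma>1] order_trans[OF _ bound]) auto
  next
    case False
    then have "dist (\<gamma> r) (P \<sigma>2) \<le> R + \<delta> + (Pr \<sigma>2 - Pr \<sigma>1) / 2"
      using near[OF \<sigma>(5)] \<open>\<bar>Pr \<sigma>2 - r\<bar> = Pr \<sigma>2 - r\<close> by argo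
    then show ?thesis using \<sigma> by (intro bexI[of _ \<sigma>2] order_trans[OF _ bound]) auto
  qed
qed

section \<open>Slim triangles in the source space\<close>

lemma image_geodesic_path:
  fixes f :: "'a::metric_space \<Rightarrow> 'b::metric_space"
  assumes cont: "continuous_on UNIV f"
    and len: "\<forall>y y' g. geodesic_from g y y' \<longrightarrow>
           rectifiable_on (f \<circ> g) 0 (dist y y') \<and>
           path_length (f \<circ> g) 0 (dist y y') \<le> lam * dist (f y) (f y') + C"
    and h: "geodesic_from h p q"
  shows "continuous_on {0..dist p q} (f \<circ> h)" "length_quasi_geodesic lam C (f \<circ> h) 0 (dist p q)"
    "(f \<circ> h) 0 = f p" "(f \<circ> h) (dist p q) = f q"
  using continuous_on_compose[OF continuous_on_geodesic_from[OF h] continuous_on_subset[OF cont]]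
    length_quasi_geodesic_comp_geodesic[OF len h] geodesic_from_start[OF h] geodesic_from_end[OF h]
  by auto

lemma image_geodesic_height_le:
  fixes f :: "'a::metric_space \<Rightarrow> 'b::metric_space"
  assumes hyp: "hyperbolic TYPE('b) \<delta>" and \<delta>: "\<delta> > 0" and lam: "lam \<ge> 1"
    and cont: "continuous_on UNIV f"
    and len: "\<forall>y y' g. geodesic_from g y y' \<longrightarrow>
           rectifiable_on (f \<circ> g) 0 (dist y y') \<and>
           path_length (f \<circ> g) 0 (dist y y') \<le> lam * dist (f y) (f y') + C"
    and h: "geodesic_from h p q" and s: "s \<in> {0..dist p q}"
  shows "gromov_product (f (h s)) (f p) (f q) \<le> (C + (lam\<^sup>2 + 6 * lam + 1) * \<delta>) / 2"
  using length_quasi_geodesic_height_le[OF hyp \<delta> lam image_geodesic_path(1,2)[OF cont len h], of s]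
    image_geodesic_path(3,4)[OF cont len h] s by simp

lemma image_geodesic_near_geodesic:
  fixes f :: "'a::metric_space \<Rightarrow> 'b::metric_space"
  assumes hyp: "hyperbolic TYPE('b) \<delta>" and \<delta>: "\<delta> > 0" and lam: "lam \<ge> 1"
    and cont: "continuous_on UNIV f"
    and len: "\<forall>y y' g. geodesic_from g y y' \<longrightarrow>
           rectifiable_on (f \<circ> g) 0 (dist y y') \<and>
           path_length (f \<circ> g) 0 (dist y y') \<le> lam * dist (f y) (f y') + C"
    and h: "geodesic_from h p q" and \<gamma>: "geodesic_from \<gamma> (f p) (f q)" and r: "r \<in> {0..dist (f p) (f q)}"
  shows "\<exists>\<tau>\<in>{0..dist p q}. dist (\<gamma> r) (f (h \<tau>)) \<le> (C + (lam\<^sup>2 + 12 * lam + 28) * \<delta>) / 6"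
  using length_quasi_geodesic_near_geodesic[OF hyp \<delta> lam _ image_geodesic_path(1,2)[OF cont len h], of \<gamma> r]
    image_geodesic_path(3,4)[OF cont len h] \<gamma> r by auto

text \<open>A point \<open>h0 s\<close> of a side is mapped near the geodesic \<open>[f x, f y]\<close>, which is \<open>\<delta>\<close>-close to one of
  the other two geodesics, which in turn stay close to the images of the other two sides; the lower
  bound on \<open>f\<close> pulls the resulting estimate back.\<close>

lemma slim_pullback:
  fixes f :: "'a::metric_space \<Rightarrow> 'b::metric_space"
  assumes a: "a > 0" and lam: "lam \<ge> 1"
    and cont: "continuous_on UNIV f"
    and lower: "\<forall>y y'. dist (f y) (f y') \<ge> a * dist y y' - b"
    and len: "\<forall>y y' g. geodesic_from g y y' \<longrightarrow>
           rectifiable_on (f \<circ> g) 0 (dist y y') \<and>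
           path_length (f \<circ> g) 0 (dist y y') \<le> lam * dist (f y) (f y') + C"
    and hyp: "hyperbolic TYPE('b) \<delta>" and \<delta>: "\<delta> > 0"
  shows "slim TYPE('a) (((4 * C + (4 * lam\<^sup>2 + 30 * lam + 43) * \<delta>) / 6 + b) / a)"
  unfolding slim_def
proof (intro allI impI, elim conjE)
  fix x y z :: 'a and h0 h1 h2 s
  assume h0: "geodesic_from h0 x y" and h1: "geodesic_from h1 x z" and h2: "geodesic_from h2 y z"
    and s: "s \<in> {0..dist x y}"
  define M where "M = (4 * C + (4 * lam\<^sup>2 + 30 * lam + 43) * \<delta>) / 6"
  have M: "M = (C + (lam\<^sup>2 + 6 * lam + 1) * \<delta>) / 2 + \<delta> + \<delta> + (C + (lam\<^sup>2 + 12 * lam + 28) * \<delta>) / 6"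
    unfolding M_def by (simp add: field_simps)
  have gs: "geodesic_space TYPE('b)" using hyperbolic_geodesic_space[OF hyp] .
  obtain \<gamma>0 where \<gamma>0: "geodesic_from \<gamma>0 (f x) (f y)" using geodesic_spaceE[OF gs] .
  obtain \<gamma>1 where \<gamma>1: "geodesic_from \<gamma>1 (f x) (f z)" using geodesic_spaceE[OF gs] .
  obtain \<gamma>2 where \<gamma>2: "geodesic_from \<gamma>2 (f y) (f z)" using geodesic_spaceE[OF gs] .
  define \<rho> where "\<rho> = gromov_product (f x) (f (h0 s)) (f y)"
  have \<rho>: "0 \<le> \<rho>" "\<rho> \<le> dist (f x) (f y)"
    unfolding \<rho>_def using gromov_product_nonneg gromov_product_le_dist_right by auto
  have close0: "dist (\<gamma>0 \<rho>) (f (h0 s)) \<le> (C + (lam\<^sup>2 + 6 * lam + 1) * \<delta>) / 2 + \<delta>"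
    using hyperbolic_dist_geodesic_gromov_product[OF hyp \<gamma>0, of "f (h0 s)"]
      image_geodesic_height_le[OF hyp \<delta> lam cont len h0 s] unfolding \<rho>_def by linarith
  have side: "\<exists>\<tau>\<in>{0..dist p q}. dist (h0 s) (h \<tau>) \<le> (M + b) / a"
    if h: "geodesic_from h p q" and \<gamma>: "geodesic_from \<gamma> (f p) (f q)"
      and \<rho>': "\<rho>' \<in> {0..dist (f p) (f q)}" "dist (\<gamma>0 \<rho>) (\<gamma> \<rho>') \<le> \<delta>" for p q h \<gamma> \<rho>'
  proof -
    obtain \<tau> where \<tau>: "\<tau> \<in> {0..dist p q}"
      "dist (\<gamma> \<rho>') (f (h \<tau>)) \<le> (C + (lam\<^sup>2 + 12 * lam + 28) * \<delta>) / 6"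
      using image_geodesic_near_geodesic[OF hyp \<delta> lam cont len h \<gamma> \<rho>'(1)] by blast
    have "dist (f (h0 s)) (f (h \<tau>)) \<le> dist (\<gamma>0 \<rho>) (f (h0 s)) + dist (\<gamma>0 \<rho>) (\<gamma> \<rho>') + dist (\<gamma> \<rho>') (f (h \<tau>))"
      using dist_triangle[of "f (h0 s)" "f (h \<tau>)" "\<gamma>0 \<rho>"] dist_triangle[of "\<gamma>0 \<rho>" "f (h \<tau>)" "\<gamma> \<rho>'"]
      by (simp add: dist_commute)
    then have "a * dist (h0 s) (h \<tau>) \<le> M + b"
      using close0 \<rho>'(2) \<tau>(2) M lower[rule_format, of "h0 s" "h \<tau>"] by linarith
    then show ?thesis using a \<tau>(1) by (intro bexI[of _ \<tau>]) (simp_all add: field_simps mult.commute)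
  qed
  show "(\<exists>s'\<in>{0..dist x z}. dist (h0 s) (h1 s') \<le> (M + b) / a)
    \<or> (\<exists>s'\<in>{0..dist y z}. dist (h0 s) (h2 s') \<le> (M + b) / a)"
    using slimD[OF hyperbolic_imp_slim[OF hyp] \<gamma>0 \<gamma>1 \<gamma>2 \<rho>] side[OF h1 \<gamma>1] side[OF h2 \<gamma>2] by blast
qed

section \<open>Slim triangles are thin\<close>

lemma closed_near_parameters:
  fixes h h' :: "real \<Rightarrow> 'a::metric_space"
  assumes "continuous_on {0..L} h" "continuous_on {0..L'} h'"
  shows "closed {\<mu>\<in>{0..L}. \<exists>\<nu>\<in>{0..L'}. dist (h \<mu>) (h' \<nu>) \<le> d}"
proof -
  define K where "K = ({0..L} \<times> {0..L'}) \<inter> (\<lambda>p. dist (h (fst p)) (h' (snd p))) -` {..d}"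
  have "continuous_on ({0..L} \<times> {0..L'}) (\<lambda>p. dist (h (fst p)) (h' (snd p)))"
    by (intro continuous_on_dist continuous_on_compose2[OF assms(1) continuous_on_fst]
        continuous_on_compose2[OF assms(2) continuous_on_snd] continuous_on_id) auto
  then have "closed K" unfolding K_def
    by (intro continuous_closed_preimage) (auto intro: compact_imp_closed compact_Times)
  moreover have "K = ({0..L} \<times> {0..L'}) \<inter> K" unfolding K_def by auto
  ultimately have "compact K" by (metis compact_Int_closed compact_Times compact_Icc)
  then have "closed (fst ` K)"
    by (intro compact_imp_closed compact_continuous_image continuous_on_fst continuous_on_id)
  moreover have "fst ` K = {\<mu>\<in>{0..L}. \<exists>\<nu>\<in>{0..L'}. dist (h \<mu>) (h' \<nu>) \<le> d}"
    unfolding K_def by force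
  ultimately show ?thesis by simp
qed

text \<open>Connectedness of a side: the parameters near the second side and those near the third side
  are closed, cover the first side and contain its two ends.\<close>

lemma slim_common_near_point:
  assumes sl: "slim TYPE('a::metric_space) d" and d: "d \<ge> 0"
    and h: "geodesic_from h (x::'a) y" and h': "geodesic_from h' x z" and k: "geodesic_from k y z"
  obtains \<mu> \<nu> \<kappa> where "\<mu> \<in> {0..dist x y}" "\<nu> \<in> {0..dist x z}" "\<kappa> \<in> {0..dist y z}"
    "dist (h \<mu>) (h' \<nu>) \<le> d" "dist (h \<mu>) (k \<kappa>) \<le> d"
proof -
  define S1 where "S1 = {\<mu>\<in>{0..dist x y}. \<exists>\<nu>\<in>{0..dist x z}. dist (h \<mu>) (h' \<nu>) \<le> d}"
  define S2 where "S2 = {\<mu>\<in>{0..dist x y}. \<exists>\<kappa>\<in>{0..dist y z}. dist (h \<mu>) (k \<kappa>) \<le> d}"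
  have "closed S1" "closed S2" unfolding S1_def S2_def
    by (rule closed_near_parameters[OF continuous_on_geodesic_from[OF h] continuous_on_geodesic_from[OF h']],
        rule closed_near_parameters[OF continuous_on_geodesic_from[OF h] continuous_on_geodesic_from[OF k]])
  moreover have "{0..dist x y} \<subseteq> S1 \<union> S2"
  proof
    fix \<mu> assume "\<mu> \<in> {0..dist x y}"
    then show "\<mu> \<in> S1 \<union> S2" unfolding S1_def S2_def using slimD[OF sl h h' k, of \<mu>] by auto
  qed
  moreover have "0 \<in> S1 \<inter> {0..dist x y}" "dist x y \<in> S2 \<inter> {0..dist x y}"
    unfolding S1_def S2_def
    using geodesic_from_start[OF h] geodesic_from_start[OF h'] geodesic_from_end[OF h]
      geodesic_from_start[OF k] d by force+
  ultimately have "S1 \<inter> S2 \<inter> {0..dist x y} \<noteq> {}"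
    using connected_closedD[OF connected_Icc, of S1 S2 0 "dist x y"] by blast
  then show ?thesis using that unfolding S1_def S2_def by blast
qed

lemma slim_insize_before_near_point:
  assumes sl: "slim TYPE('a::metric_space) d" and d: "d \<ge> 0" and gs: "geodesic_space TYPE('a)"
    and h: "geodesic_from h (x::'a) y" and h': "geodesic_from h' x z"
    and \<mu>: "0 \<le> \<mu>" "\<mu> \<le> dist x y" and \<nu>: "0 \<le> \<nu>" "\<nu> \<le> dist x z"
    and near: "dist (h \<mu>) (h' \<nu>) \<le> d"
    and s: "0 \<le> s" "s \<le> \<mu>" "s \<le> dist x z"
  shows "dist (h s) (h' s) \<le> 4 * d"
proof -
  define m where "m = h \<mu>"
  define a' where "a' = h' \<nu>"
  obtain j where j: "geodesic_from j m a'" using geodesic_spaceE[OF gs] .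
  have hm: "geodesic_from h x m" unfolding m_def by (rule geodesic_from_prefix[OF h \<mu>])
  have ha: "geodesic_from h' x a'" unfolding a'_def by (rule geodesic_from_prefix[OF h' \<nu>])
  have xm: "dist x m = \<mu>" and xa: "dist x a'= \<nu>"
    unfolding m_def a'_def using dist_start_geodesic_from[OF h \<mu>] dist_start_geodesic_from[OF h' \<nu>] .
  have sy: "s \<le> dist x y" using s \<mu> by linarith
  have xp: "dist x (h s) = s" using dist_start_geodesic_from[OF h s(1) sy] .
  have pm: "dist (h s) m = \<mu> - s" unfolding m_def using geodesic_from_dist[OF h, of s \<mu>] s \<mu> by auto
  have aq: "dist a' (h' s) = \<bar>\<nu> - s\<bar>" unfolding a'_def using geodesic_from_dist[OF h'] \<nu> s by auto
  have ma: "\<bar>\<nu> - \<mu>\<bar> \<le> dist m a'"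
    using dist_triangle[of x a' m] dist_triangle[of x m a'] xm xa by (auto simp: dist_commute abs_le_iff)
  consider (side) s' where "s' \<in> {0..\<nu>}" "dist (h s) (h' s') \<le> d"
    | (cross) \<iota> where "\<iota> \<in> {0..dist m a'}" "dist (h s) (j \<iota>) \<le> d"
    using slimD[OF sl hm ha j s(1)] s(2) unfolding xm xa by auto
  then show ?thesis
  proof cases
    case side
    have "dist x (h' s') = s'" using dist_start_geodesic_from[OF h'] side(1) \<nu> by auto
    then have "\<bar>s - s'\<bar> \<le> d"
      using dist_triangle[of x "h s" "h' s'"] dist_triangle[of x "h' s'" "h s"] side(2) xp
      by (auto simp: dist_commute abs_le_iff)
    moreover have "dist (h' s') (h' s) = \<bar>s' - s\<bar>" using geodesic_from_dist[OF h'] side(1) \<nu> s by auto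
    moreover have "dist (h s) (h' s) \<le> dist (h s) (h' s') + dist (h' s') (h' s)" by (rule dist_triangle)
    ultimately show ?thesis using side(2) d by (simp add: abs_minus_commute)
  next
    case cross
    have "dist (j \<iota>) m = \<iota>" "dist (j \<iota>) a' = dist m a' - \<iota>"
      using dist_start_geodesic_from[OF j] dist_geodesic_from_end[OF j] cross(1) by (auto simp: dist_commute)
    then have "dist (h s) m \<le> d + \<iota>" "dist (h s) a' \<le> d + (dist m a' - \<iota>)"
      using dist_triangle[of "h s" m "j \<iota>"] dist_triangle[of "h s" a' "j \<iota>"] cross(2) by linarith+
    moreover have "dist (h s) (h' s) \<le> dist (h s) a' + dist a' (h' s)" by (rule dist_triangle)
    moreover have "dist m a' \<le> d" using near unfolding m_def a'_def .
    ultimately show ?thesis using pm aq ma s by (auto simp: abs_le_iff)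
  qed
qed

lemma dist_le_after_near_points:
  assumes h: "geodesic_from h x y" and h': "geodesic_from h' x z" and k: "geodesic_from k y z"
    and \<mu>: "0 \<le> \<mu>" "\<mu> \<le> dist x y" and \<nu>: "0 \<le> \<nu>" "\<nu> \<le> dist x z" and \<kappa>: "0 \<le> \<kappa>" "\<kappa> \<le> dist y z"
    and near: "dist (h \<mu>) (h' \<nu>) \<le> d" "dist (h \<mu>) (k \<kappa>) \<le> d"
    and s: "\<mu> \<le> s" "s \<le> gromov_product x y z"
  shows "dist (h s) (h' s) \<le> 4 * d"
proof -
  define m where "m = h \<mu>"
  define a' where "a' = h' \<nu>"
  define b' where "b' = k \<kappa>"
  have sy: "s \<le> dist x y" and sz: "s \<le> dist x z"
    using s gromov_product_le_dist_left[of x y z] gromov_product_le_dist_right[of x y z] by linarith+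
  have xm: "dist x m = \<mu>" and xa: "dist x a' = \<nu>" and yb: "dist y b' = \<kappa>"
    unfolding m_def a'_def b'_def
    using dist_start_geodesic_from[OF h \<mu>] dist_start_geodesic_from[OF h' \<nu>]
      dist_start_geodesic_from[OF k \<kappa>] by auto
  have my: "dist m y = dist x y - \<mu>" and az: "dist a' z = dist x z - \<nu>" and bz: "dist b' z = dist y z - \<kappa>"
    unfolding m_def a'_def b'_def
    using dist_geodesic_from_end[OF h \<mu>] dist_geodesic_from_end[OF h' \<nu>]
      dist_geodesic_from_end[OF k \<kappa>] by auto
  have e1: "\<bar>\<nu> - \<mu>\<bar> \<le> dist m a'"
    using dist_triangle[of x a' m] dist_triangle[of x m a'] xm xa by (auto simp: dist_commute abs_le_iff)
  have e2: "\<bar>\<kappa> - (dist x y - \<mu>)\<bar> \<le> dist m b'"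
    using dist_triangle[of y b' m] dist_triangle[of y m b'] my yb by (auto simp: dist_commute abs_le_iff)
  have "dist a' b' \<le> dist m a' + dist m b'" using dist_triangle[of a' b' m] by (simp add: dist_commute)
  then have e3: "\<bar>(dist x z - \<nu>) - (dist y z - \<kappa>)\<bar> \<le> dist m a' + dist m b'"
    using dist_triangle[of a' z b'] dist_triangle[of b' z a'] az bz by (auto simp: dist_commute abs_le_iff)
  have pm: "dist (h s) m = s - \<mu>" unfolding m_def using geodesic_from_dist[OF h, of s \<mu>] s \<mu> sy by auto
  have aq: "dist a' (h' s) = \<bar>\<nu> - s\<bar>" unfolding a'_def using geodesic_from_dist[OF h'] \<nu> s \<mu> sz by auto
  have "dist (h s) (h' s) \<le> dist (h s) m + dist m a' + dist a' (h' s)"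
    using dist_triangle[of "h s" "h' s" m] dist_triangle[of m "h' s" a'] by linarith
  then show ?thesis
    using pm aq e1 e2 e3 s near unfolding m_def[symmetric] a'_def[symmetric] b'_def[symmetric]
    by (auto simp: abs_le_iff gromov_product_def)
qed

lemma slim_insize:
  assumes sl: "slim TYPE('a::metric_space) d" and d: "d \<ge> 0" and gs: "geodesic_space TYPE('a)"
    and h: "geodesic_from h (x::'a) y" and h': "geodesic_from h' x z"
    and s: "0 \<le> s" "s \<le> gromov_product x y z"
  shows "dist (h s) (h' s) \<le> 4 * d"
proof -
  obtain k where k: "geodesic_from k y z" using geodesic_spaceE[OF gs] .
  obtain \<mu> \<nu> \<kappa> where \<mu>\<nu>\<kappa>: "\<mu> \<in> {0..dist x y}" "\<nu> \<in> {0..dist x z}" "\<kappa> \<in> {0..dist y z}"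
    and near: "dist (h \<mu>) (h' \<nu>) \<le> d" "dist (h \<mu>) (k \<kappa>) \<le> d"
    using slim_common_near_point[OF sl d h h' k] .
  show ?thesis
  proof (cases "s \<le> \<mu>")
    case True
    moreover have "s \<le> dist x z" using s gromov_product_le_dist_right[of x y z] by linarith
    ultimately show ?thesis
      using slim_insize_before_near_point[OF sl d gs h h' _ _ _ _ near(1)] \<mu>\<nu>\<kappa> s by auto
  next
    case False
    then show ?thesis using dist_le_after_near_points[OF h h' k _ _ _ _ _ _ near] \<mu>\<nu>\<kappa> s by auto
  qed
qed

lemma tripod_map_side0:
  "tripod_map x y z 0 s = (if s \<le> gromov_product x y z then (0, gromov_product x y z - s)
     else (1, s - gromov_product x y z))"
  unfolding tripod_map_def Let_def tripod_pt_def gromov_product_def by auto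

lemma tripod_map_side1:
  "tripod_map x y z 1 s = (if s \<le> gromov_product x y z then (0, gromov_product x y z - s)
     else (2, s - gromov_product x y z))"
  unfolding tripod_map_def Let_def tripod_pt_def gromov_product_def by auto

lemma tripod_map_side2:
  "tripod_map x y z 2 t = (if t < gromov_product y x z then (1, gromov_product y x z - t)
     else if t = gromov_product y x z then (0, 0) else (2, t - gromov_product y x z))"
  unfolding tripod_map_def Let_def tripod_pt_def gromov_product_def by (auto simp: dist_commute)

lemmas tripod_map_sides = tripod_map_side0 tripod_map_side1 tripod_map_side2

lemma tripod_map_side_inj:
  assumes "k \<in> {0, 1, 2}" "tripod_map x y z k s = tripod_map x y z k t"
  shows "s = t"
proof -
  consider "k = 0" | "k = 1" | "k = 2" using assms(1) by blast
  then show ?thesis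
    by cases (use assms(2) in \<open>auto simp: tripod_map_sides tripod_map_side1[unfolded One_nat_def]
      split: if_splits\<close>)
qed

lemma tripod_map_eq_01:
  "tripod_map x y z 0 s = tripod_map x y z 1 t \<Longrightarrow> s = t \<and> s \<le> gromov_product x y z"
  unfolding tripod_map_sides by (auto split: if_splits)

lemma tripod_map_eq_02:
  "tripod_map x y z 0 s = tripod_map x y z 2 t \<Longrightarrow> s = dist x y - t \<and> t \<le> gromov_product y x z"
  using gromov_product_add[of x y z] unfolding tripod_map_sides by (auto split: if_splits)

lemma tripod_map_eq_12:
  "tripod_map x y z 1 s = tripod_map x y z 2 t
    \<Longrightarrow> dist y z - t = dist x z - s \<and> dist x z - s \<le> gromov_product z x y"
  using gromov_product_add[of x z y] gromov_product_add[of y z x] gromov_product_commute[of z y x]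
  unfolding tripod_map_sides gromov_product_commute[of _ z] by (auto split: if_splits)

text \<open>Thinness of a triangle only needs insize bounds at its three vertices, obtained from
  \<open>slim_insize\<close> applied to the suitably reversed sides.\<close>

lemma slim_imp_delta_thin:
  assumes sl: "slim TYPE('a::metric_space) d" and d: "d \<ge> 0" and gs: "geodesic_space TYPE('a)"
    and h0: "geodesic_from h0 (x::'a) y" and h1: "geodesic_from h1 x z" and h2: "geodesic_from h2 y z"
  shows "delta_thin (4 * d) x y z h0 h1 h2"
proof -
  note rev = geodesic_from_reverse[OF h0] geodesic_from_reverse[OF h1] geodesic_from_reverse[OF h2]
  have vertex_x: "dist (h0 s) (h1 s) \<le> 4 * d" if "0 \<le> s" "s \<le> gromov_product x y z" for s
    using slim_insize[OF sl d gs h0 h1 that] .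
  have vertex_y: "dist (h0 (dist x y - t)) (h2 t) \<le> 4 * d" if "0 \<le> t" "t \<le> gromov_product y x z" for t
    using slim_insize[OF sl d gs rev(1) h2 that] .
  have vertex_z: "dist (h1 (dist x z - r)) (h2 (dist y z - r)) \<le> 4 * d"
    if "0 \<le> r" "r \<le> gromov_product z x y" for r
    using slim_insize[OF sl d gs rev(2) rev(3) that] .
  have c01: "dist (h0 s) (h1 t) \<le> 4 * d" if "tripod_map x y z 0 s = tripod_map x y z 1 t" "0 \<le> s" for s t
    using tripod_map_eq_01[OF that(1)] vertex_x that(2) by auto
  have c02: "dist (h0 s) (h2 t) \<le> 4 * d" if "tripod_map x y z 0 s = tripod_map x y z 2 t" "0 \<le> t" for s t
    using tripod_map_eq_02[OF that(1)] vertex_y that(2) by auto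
  have c12: "dist (h1 s) (h2 t) \<le> 4 * d"
    if "tripod_map x y z 1 s = tripod_map x y z 2 t" "s \<le> dist x z" for s t
  proof -
    have "dist y z - (dist x z - s) = t" using tripod_map_eq_12[OF that(1)] by linarith
    moreover have "dist (h1 (dist x z - (dist x z - s))) (h2 (dist y z - (dist x z - s))) \<le> 4 * d"
      using tripod_map_eq_12[OF that(1)] that(2) by (intro vertex_z) auto
    ultimately show ?thesis by simp
  qed
  show ?thesis unfolding delta_thin_def Let_def
  proof (intro ballI impI)
    fix k l :: nat and s t
    assume k: "k \<in> {0,1,2}" and l: "l \<in> {0,1,2}"
      and s: "s \<in> {0..(if k = 0 then dist x y else if k = 1 then dist x z else dist y z)}"
      and t: "t \<in> {0..(if l = 0 then dist x y else if l = 1 then dist x z else dist y z)}"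
      and eq: "tripod_map x y z k s = tripod_map x y z l t"
    show "dist ((if k = 0 then h0 else if k = 1 then h1 else h2) s)
        ((if l = 0 then h0 else if l = 1 then h1 else h2) t) \<le> 4 * d"
      using k l s t eq tripod_map_side_inj[of k x y z s t] d c01[of s t] c01[of t s] c02[of s t] c02[of t s]
        c12[of s t] c12[of t s]
      by (elim insertE emptyE) (auto simp: dist_commute)
  qed
qed

lemma slim_imp_hyperbolic:
  assumes "proper_space TYPE('a::metric_space)" "geodesic_space TYPE('a)" "slim TYPE('a) d" "d \<ge> 0"
  shows "hyperbolic TYPE('a) (4 * d)"
  using assms slim_imp_delta_thin unfolding hyperbolic_def by blast

lemma hyperbolicity_constant_bounds:
  fixes lam C \<delta> :: real
  assumes "lam \<ge> 1" "C \<ge> 0" "\<delta> \<ge> 0"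
  shows "(4 * C + (4 * lam\<^sup>2 + 30 * lam + 43) * \<delta>) / 6
      \<le> (6 * lam\<^sup>2 + 14 * lam + 5) * \<delta> + (4 * lam + 3) / (6 * lam + 2) * C"
    and "(4 * lam + 3) / (6 * lam + 2) * C \<le> C"
proof -
  have "2 / 3 \<le> (4 * lam + 3) / (6 * lam + 2)" "(4 * lam + 3) / (6 * lam + 2) \<le> 1"
    using assms(1) by (simp_all add: field_simps)
  then have "2 / 3 * C \<le> (4 * lam + 3) / (6 * lam + 2) * C" "(4 * lam + 3) / (6 * lam + 2) * C \<le> 1 * C"
    using assms(2) by (intro mult_right_mono; simp)+
  moreover have "(4 * lam\<^sup>2 + 30 * lam + 43) / 6 \<le> 6 * lam\<^sup>2 + 14 * lam + 5"
    using assms(1) mult_mono[OF assms(1) assms(1)] by (simp add: power2_eq_square field_simps)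
  then have "(4 * lam\<^sup>2 + 30 * lam + 43) / 6 * \<delta> \<le> (6 * lam\<^sup>2 + 14 * lam + 5) * \<delta>"
    using assms(3) by (rule mult_right_mono)
  moreover have "(4 * C + (4 * lam\<^sup>2 + 30 * lam + 43) * \<delta>) / 6
      = 2 / 3 * C + (4 * lam\<^sup>2 + 30 * lam + 43) / 6 * \<delta>" by (simp add: field_simps)
  ultimately show "(4 * C + (4 * lam\<^sup>2 + 30 * lam + 43) * \<delta>) / 6
      \<le> (6 * lam\<^sup>2 + 14 * lam + 5) * \<delta> + (4 * lam + 3) / (6 * lam + 2) * C"
    and "(4 * lam + 3) / (6 * lam + 2) * C \<le> C" by linarith+
qed

theorem mainTheorem19:
  fixes f :: "'a::metric_space \<Rightarrow> 'b::metric_space"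
    and a b lam C \<delta> :: real
  assumes "proper_space TYPE('a)" and "geodesic_space TYPE('a)"
    and "proper_space TYPE('b)" and "geodesic_space TYPE('b)"
    and "a > 0" and "b \<ge> 0" and "lam \<ge> 1" and "C \<ge> 0"
    and "continuous_on UNIV f"
    and "\<forall>y y'. dist (f y) (f y') \<ge> a * dist y y' - b"
    and "\<forall>y y' g. geodesic_from g y y' \<longrightarrow>
           rectifiable_on (f \<circ> g) 0 (dist y y') \<and>
           path_length (f \<circ> g) 0 (dist y y') \<le> lam * dist (f y) (f y') + C"
    and "hyperbolic TYPE('b) \<delta>"
  shows "hyperbolic TYPE('a)
           (4 / a * ((6 * lam^2 + 14 * lam + 5) * \<delta> + (4 * lam + 3) / (6 * lam + 2) * C + b))
       \<and> 4 / a * ((6 * lam^2 + 14 * lam + 5) * \<delta> + (4 * lam + 3) / (6 * lam + 2) * C + b)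
           \<le> 4 / a * ((6 * lam^2 + 14 * lam + 5) * \<delta> + C + b)"
proof -
  define D where "D \<epsilon> = 4 * (((4 * C + (4 * lam\<^sup>2 + 30 * lam + 43) * (\<delta> + \<epsilon>)) / 6 + b) / a)" for \<epsilon>
  have \<delta>: "\<delta> \<ge> 0" using hyperbolic_nonneg[OF assms(12)] .
  have "hyperbolic TYPE('a) (D \<epsilon>)" if "\<epsilon> > 0" for \<epsilon>
  proof -
    have "hyperbolic TYPE('b) (\<delta> + \<epsilon>)" using hyperbolic_mono[OF assms(12)] that by simp
    then have "slim TYPE('a) (((4 * C + (4 * lam\<^sup>2 + 30 * lam + 43) * (\<delta> + \<epsilon>)) / 6 + b) / a)"
      using slim_pullback[OF assms(5,7,9-11)] \<delta> that by simp
    moreover have "0 \<le> ((4 * C + (4 * lam\<^sup>2 + 30 * lam + 43) * (\<delta> + \<epsilon>)) / 6 + b) / a"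
      using assms(5-8) \<delta> that
      by (intro divide_nonneg_pos add_nonneg_nonneg divide_nonneg_pos mult_nonneg_nonneg) auto
    ultimately show ?thesis unfolding D_def by (rule slim_imp_hyperbolic[OF assms(1,2)])
  qed
  moreover have "(D \<longlongrightarrow> D 0) (at_right 0)" unfolding D_def
    using assms(5) by (intro tendsto_intros) auto
  ultimately have "hyperbolic TYPE('a) (D 0)" by (rule hyperbolic_limit)
  moreover have "D 0 \<le> 4 / a * ((6 * lam^2 + 14 * lam + 5) * \<delta> + (4 * lam + 3) / (6 * lam + 2) * C + b)"
    using hyperbolicity_constant_bounds(1)[OF assms(7,8) \<delta>] assms(5) unfolding D_def
    by (simp add: divide_right_mono)
  moreover have "4 / a * ((6 * lam^2 + 14 * lam + 5) * \<delta> + (4 * lam + 3) / (6 * lam + 2) * C + b)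
      \<le> 4 / a * ((6 * lam^2 + 14 * lam + 5) * \<delta> + C + b)"
    using hyperbolicity_constant_bounds(2)[OF assms(7,8) \<delta>] assms(5) by (intro mult_left_mono) auto
  ultimately show ?thesis using hyperbolic_mono by blast
qed

end
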